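(* The Ranked Pairs VCCR $rp$, the Beat Path VCCR $bp$, and the GOCHA VCCR $gocha$ each satisfy Coherent Defeat: for every profile $\mathbf P$ and $x,y\in X(\mathbf P)$, if $\mathrm{Margin}_{\mathbf P}(x,y)>0$ and there is no majority path from $y$ to $x$, then $(x,y)$ belongs to $rp(\mathbf P)$, $bp(\mathbf P)$ and $gocha(\mathbf P)$.
   Context: Profiles: $\mathbf P:V\to\mathcal L(X)$, $V$ nonempty finite set of voters, $X=X(\mathbf P)$ nonempty finite set of candidates, $\mathcal L(X)$ strict linear orders. $\mathrm{Margin}_{\mathbf P}(x,y)$ = #voters ranking $x$ above $y$ minus #ranking $y$ above $x$. A majority path from $x_1$ to $x_n$ is $(x_1,\dots,x_n)$ with all $\mathrm{Margin}_{\mathbf P}(x_i,x_{i+1})>0$; its strength is the minimum of these margins. Ranked Pairs: let $Pairs(\mathbf P)=\{(x,y): x\ne y,\ \mathrm{Margin}_{\mathbf P}(x,y)\ge 0\}$; a tie-breaker is a strict linear order $L$ on $Pairs(\mathbf P)$. Order $Pairs(\mathbf P)$ by decreasing margin, breaking ties by $L$: $(x_1,y_1),\dots,(x_m,y_m)$. Let $D_0=\varnothing$, and $D_i=D_{i-1}\cup\{(x_i,y_i)\}$ if this is acyclic, else $D_i=D_{i-1}\cup\{(y_i,x_i)\}$; set $rp(\mathbf P,L)=D_m$ and $rp(\mathbf P)=\bigcap_L rp(\mathbf P,L)$ over all tie-breakers $L$. Beat Path: $\mathrm{Strength}_{\mathbf P}(x,y)$ is the maximum strength of a majority path from $x$ to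 $y$ ($0$ if none); $(x,y)\in bp(\mathbf P)$ iff $\mathrm{Strength}_{\mathbf P}(x,y)>\mathrm{Strength}_{\mathbf P}(y,x)$. GOCHA: $(x,y)\in gocha(\mathbf P)$ iff there is a majority path from $x$ to $y$ but none from $y$ to $x$. *)

theory Defs
  imports Main
begin

text \<open>A profile: nonempty finite voter set V, nonempty finite candidate set X,
  each voter i in V has a strict linear order P i on X (as a relation;
  (a,b) \<in> P i means voter i ranks a above b).\<close>
definition profile :: "'v set \<Rightarrow> 'c set \<Rightarrow> ('v \<Rightarrow> 'c rel) \<Rightarrow> bool" where
  "profile V X P \<longleftrightarrow> finite V \<and> V \<noteq> {} \<and> finite X \<and> X \<noteq> {} \<and>
     (\<forall>i\<in>V. strict_linear_order_on X (P i) \<and> P i \<subseteq> X \<times> X)"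

definition Margin :: "'v set \<Rightarrow> ('v \<Rightarrow> 'c rel) \<Rightarrow> 'c \<Rightarrow> 'c \<Rightarrow> int" where
  "Margin V P x y = int (card {i\<in>V. (x, y) \<in> P i}) - int (card {i\<in>V. (y, x) \<in> P i})"

definition majority_path :: "'v set \<Rightarrow> 'c set \<Rightarrow> ('v \<Rightarrow> 'c rel) \<Rightarrow> 'c list \<Rightarrow> bool" where
  "majority_path V X P xs \<longleftrightarrow> 2 \<le> length xs \<and> set xs \<subseteq> X \<and>
     (\<forall>k. Suc k < length xs \<longrightarrow> 0 < Margin V P (xs ! k) (xs ! Suc k))"

definition majority_path_from_to ::
    "'v set \<Rightarrow> 'c set \<Rightarrow> ('v \<Rightarrow> 'c rel) \<Rightarrow> 'c \<Rightarrow> 'c \<Rightarrow> 'c list \<Rightarrow> bool" where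
  "majority_path_from_to V X P x y xs \<longleftrightarrow>
     majority_path V X P xs \<and> hd xs = x \<and> last xs = y"

definition path_strength :: "'v set \<Rightarrow> ('v \<Rightarrow> 'c rel) \<Rightarrow> 'c list \<Rightarrow> int" where
  "path_strength V P xs = Min {Margin V P (xs ! k) (xs ! Suc k) | k. Suc k < length xs}"

definition Strength :: "'v set \<Rightarrow> 'c set \<Rightarrow> ('v \<Rightarrow> 'c rel) \<Rightarrow> 'c \<Rightarrow> 'c \<Rightarrow> int" where
  "Strength V X P x y =
     (if \<exists>xs. majority_path_from_to V X P x y xs
      then Max {path_strength V P xs | xs. majority_path_from_to V X P x y xs}
      else 0)"

definition bp :: "'v set \<Rightarrow> 'c set \<Rightarrow> ('v \<Rightarrow> 'c rel) \<Rightarrow> 'c rel" where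
  "bp V X P = {(x, y). x \<in> X \<and> y \<in> X \<and> Strength V X P x y > Strength V X P y x}"

definition gocha :: "'v set \<Rightarrow> 'c set \<Rightarrow> ('v \<Rightarrow> 'c rel) \<Rightarrow> 'c rel" where
  "gocha V X P = {(x, y). x \<in> X \<and> y \<in> X \<and>
     (\<exists>xs. majority_path_from_to V X P x y xs) \<and>
     \<not> (\<exists>xs. majority_path_from_to V X P y x xs)}"

definition Pairs :: "'v set \<Rightarrow> 'c set \<Rightarrow> ('v \<Rightarrow> 'c rel) \<Rightarrow> 'c rel" where
  "Pairs V X P = {(x, y). x \<in> X \<and> y \<in> X \<and> x \<noteq> y \<and> 0 \<le> Margin V P x y}"

definition tie_breaker :: "'v set \<Rightarrow> 'c set \<Rightarrow> ('v \<Rightarrow> 'c rel) \<Rightarrow> ('c \<times> 'c) rel \<Rightarrow> bool" where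
  "tie_breaker V X P L \<longleftrightarrow> strict_linear_order_on (Pairs V X P) L \<and>
     L \<subseteq> Pairs V X P \<times> Pairs V X P"

definition rp_order ::
    "'v set \<Rightarrow> 'c set \<Rightarrow> ('v \<Rightarrow> 'c rel) \<Rightarrow> ('c \<times> 'c) rel \<Rightarrow> ('c \<times> 'c) list \<Rightarrow> bool" where
  "rp_order V X P L ps \<longleftrightarrow> distinct ps \<and> set ps = Pairs V X P \<and>
     sorted_wrt (\<lambda>(a, b) (c, d). Margin V P a b > Margin V P c d \<or>
                   (Margin V P a b = Margin V P c d \<and> ((a, b), (c, d)) \<in> L)) ps"

definition rp_step :: "'c rel \<Rightarrow> 'c \<times> 'c \<Rightarrow> 'c rel" where
  "rp_step D p = (if acyclic (insert p D) then insert p D else insert (snd p, fst p) D)"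

definition rp_run :: "('c \<times> 'c) list \<Rightarrow> 'c rel" where
  "rp_run ps = foldl rp_step {} ps"

text \<open>rp(P,L) = D_m for the (unique) ordering determined by L; rp(P) is the
  intersection over all tie-breakers L.\<close>
definition rp :: "'v set \<Rightarrow> 'c set \<Rightarrow> ('v \<Rightarrow> 'c rel) \<Rightarrow> 'c rel" where
  "rp V X P = {(x, y). \<forall>L ps. tie_breaker V X P L \<and> rp_order V X P L ps \<longrightarrow> (x, y) \<in> rp_run ps}"

end

theory Submission
  imports Defs
begin

text \<open>Ranked Pairs processes pairs by decreasing margin, so every pair handled before
  \<open>(x, y)\<close> is a majority edge, whatever the tie-breaker. The locked-in relation stays
  acyclic and inside the transitive closure of the majority relation; hence \<open>(x, y)\<close>
  could only be reversed if \<open>y\<close> reached \<open>x\<close> along majority edges, i.e. by a majority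
  path. For Beat Path, \<open>Strength(y, x) = 0\<close> while the one-edge path \<open>[x, y]\<close> gives
  \<open>Strength(x, y) \<ge> Margin(x, y) > 0\<close>.\<close>

definition majority_rel :: "'v set \<Rightarrow> 'c set \<Rightarrow> ('v \<Rightarrow> 'c rel) \<Rightarrow> 'c rel" where
  "majority_rel V X P = {(a, b). a \<in> X \<and> b \<in> X \<and> 0 < Margin V P a b}"

lemma Margin_self [simp]: "Margin V P x x = 0"
  by (simp add: Margin_def)

lemma irrefl_majority_rel: "irrefl (majority_rel V X P)"
  by (simp add: irrefl_def majority_rel_def)

lemma majority_path_from_to_edge:
  assumes "(x, y) \<in> majority_rel V X P"
  shows "majority_path_from_to V X P x y [x, y]"
  using assms by (auto simp: majority_path_from_to_def majority_path_def majority_rel_def less_Suc_eq)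

lemma majority_path_from_to_Cons:
  assumes "(a, c) \<in> majority_rel V X P" and "majority_path_from_to V X P c b xs"
  shows "majority_path_from_to V X P a b (a # xs)"
proof -
  have path: "majority_path V X P xs" and "hd xs = c" and "last xs = b"
    using assms(2) by (simp_all add: majority_path_from_to_def)
  then obtain ys where xs: "xs = c # ys"
    by (cases xs) (auto simp: majority_path_def)
  have "0 < Margin V P ((a # xs) ! k) ((a # xs) ! Suc k)" if "Suc k < length (a # xs)" for k
  proof (cases k)
    case 0
    then show ?thesis using assms(1) by (simp add: xs majority_rel_def)
  next
    case (Suc j)
    then show ?thesis using that path by (simp add: majority_path_def)
  qed
  with path assms(1) \<open>last xs = b\<close> show ?thesis
    by (auto simp: xs majority_path_from_to_def majority_path_def majority_rel_def)
qed

lemma majority_path_from_to_if_trancl: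
  assumes "(a, b) \<in> (majority_rel V X P)\<^sup>+"
  shows "\<exists>xs. majority_path_from_to V X P a b xs"
  using assms
proof (induction rule: converse_trancl_induct)
  case (base a)
  then show ?case by (blast intro: majority_path_from_to_edge)
next
  case (step a c)
  then show ?case by (blast intro: majority_path_from_to_Cons)
qed

lemma path_strength_edge: "path_strength V P [x, y] = Margin V P x y"
proof -
  have "{Margin V P ([x, y] ! k) ([x, y] ! Suc k) | k. Suc k < length [x, y]} = {Margin V P x y}"
    by (auto simp: less_Suc_eq)
  then show ?thesis by (simp add: path_strength_def)
qed

lemma path_strength_in_Margin_image:
  assumes "majority_path V X P xs"
  shows "path_strength V P xs \<in> (\<lambda>(a, b). Margin V P a b) ` (X \<times> X)"
proof -
  let ?T = "{Margin V P (xs ! k) (xs ! Suc k) | k. Suc k < length xs}"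
  have "?T = (\<lambda>k. Margin V P (xs ! k) (xs ! Suc k)) ` {k. Suc k < length xs}"
    by auto
  moreover have "finite {k. Suc k < length xs}"
    by (rule finite_subset[of _ "{..<length xs}"]) auto
  ultimately have "finite ?T" by simp
  moreover have "Margin V P (xs ! 0) (xs ! Suc 0) \<in> ?T"
    using assms by (auto simp: majority_path_def)
  then have "?T \<noteq> {}" by blast
  ultimately have "path_strength V P xs \<in> ?T"
    unfolding path_strength_def by (rule Min_in)
  then obtain k where "Suc k < length xs" "path_strength V P xs = Margin V P (xs ! k) (xs ! Suc k)"
    by blast
  with assms show ?thesis
    by (force simp: majority_path_def)
qed

lemma path_strength_le_Strength:
  assumes "finite X" and "majority_path_from_to V X P x y xs"
  shows "path_strength V P xs \<le> Strength V X P x y"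
proof -
  let ?S = "{path_strength V P xs | xs. majority_path_from_to V X P x y xs}"
  have "?S \<subseteq> (\<lambda>(a, b). Margin V P a b) ` (X \<times> X)"
  proof
    fix s assume "s \<in> ?S"
    then obtain ys where "majority_path_from_to V X P x y ys" and "s = path_strength V P ys"
      by blast
    then show "s \<in> (\<lambda>(a, b). Margin V P a b) ` (X \<times> X)"
      by (simp add: majority_path_from_to_def path_strength_in_Margin_image)
  qed
  then have "finite ?S"
    by (rule finite_subset) (simp add: assms(1))
  moreover have "path_strength V P xs \<in> ?S"
    using assms(2) by blast
  moreover have "Strength V X P x y = Max ?S"
    using assms(2) unfolding Strength_def by (subst if_P) blast+
  ultimately show ?thesis
    by simp
qed

lemma Strength_eq_0_if_no_path:
  assumes "\<nexists>xs. majority_path_from_to V X P y x xs"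
  shows "Strength V X P y x = 0"
  using assms by (simp add: Strength_def)

lemma rp_step_acyclic:
  assumes "acyclic D" and "a \<noteq> b"
  shows "acyclic (rp_step D (a, b))"
proof (cases "acyclic (insert (a, b) D)")
  case True
  then show ?thesis by (simp add: rp_step_def)
next
  case False
  then have "(b, a) \<in> D\<^sup>*"
    using assms(1) by (simp add: acyclic_insert)
  have "(a, b) \<notin> D\<^sup>*"
  proof
    assume "(a, b) \<in> D\<^sup>*"
    then have "(a, b) \<in> D\<^sup>+"
      using assms(2) by (simp add: rtrancl_eq_or_trancl)
    then have "(a, a) \<in> D\<^sup>+"
      using \<open>(b, a) \<in> D\<^sup>*\<close> by (rule trancl_rtrancl_trancl)
    with assms(1) show False
      by (simp add: acyclic_def)
  qed
  with False assms(1) show ?thesis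
    by (simp add: rp_step_def acyclic_insert)
qed

lemma rp_step_subset_trancl:
  assumes "acyclic D" and "D \<subseteq> R\<^sup>+" and "(a, b) \<in> R"
  shows "rp_step D (a, b) \<subseteq> R\<^sup>+"
proof (cases "acyclic (insert (a, b) D)")
  case True
  with assms show ?thesis by (auto simp: rp_step_def)
next
  case False
  then have "(b, a) \<in> D\<^sup>*"
    using assms(1) by (simp add: acyclic_insert)
  then have "(b, a) \<in> R\<^sup>*"
    using rtrancl_mono[OF assms(2)] by auto
  then have "(b, a) \<in> R\<^sup>+"
    using assms(3) by (auto simp: rtrancl_eq_or_trancl)
  with assms(2) show ?thesis
    unfolding rp_step_def if_not_P[OF False] by simp
qed

lemma foldl_rp_step_invariant:
  assumes "acyclic D" and "D \<subseteq> R\<^sup>+" and "irrefl R" and "set ps \<subseteq> R"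
  shows "acyclic (foldl rp_step D ps) \<and> foldl rp_step D ps \<subseteq> R\<^sup>+"
  using assms
proof (induction ps arbitrary: D)
  case Nil
  then show ?case by simp
next
  case (Cons p ps)
  obtain a b where p: "p = (a, b)"
    by (cases p)
  have "(a, b) \<in> R" and "a \<noteq> b"
    using Cons.prems(3,4) p by (auto simp: irrefl_def)
  then have "acyclic (rp_step D p)" and "rp_step D p \<subseteq> R\<^sup>+"
    unfolding p using Cons.prems(1,2) by (simp_all add: rp_step_acyclic rp_step_subset_trancl)
  with Cons.IH[of "rp_step D p"] Cons.prems(3,4) show ?case
    by simp
qed

lemma foldl_rp_step_mono: "D \<subseteq> foldl rp_step D ps"
proof (induction ps arbitrary: D)
  case Nil
  then show ?case by simp
next
  case (Cons p ps)
  have "D \<subseteq> rp_step D p"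
    by (auto simp: rp_step_def)
  also have "\<dots> \<subseteq> foldl rp_step (rp_step D p) ps"
    by (rule Cons.IH)
  finally show ?case
    by simp
qed

lemma rp_run_locks_in_pair:
  assumes "set pre \<subseteq> R" and "irrefl R" and "(y, x) \<notin> R\<^sup>+" and "x \<noteq> y"
  shows "(x, y) \<in> rp_run (pre @ (x, y) # post)"
proof -
  define D where "D = foldl rp_step {} pre"
  have "acyclic D" and D_sub: "D \<subseteq> R\<^sup>+"
    using foldl_rp_step_invariant[of "{}" R pre] assms(1,2) by (simp_all add: D_def acyclic_def)
  moreover have "(y, x) \<notin> D\<^sup>*"
  proof
    assume "(y, x) \<in> D\<^sup>*"
    then have "(y, x) \<in> D\<^sup>+"
      using assms(4) by (simp add: rtrancl_eq_or_trancl)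
    then have "(y, x) \<in> (R\<^sup>+)\<^sup>+"
      using D_sub by (rule trancl_mono)
    with assms(3) show False
      by simp
  qed
  ultimately have "(x, y) \<in> rp_step D (x, y)"
    by (simp add: rp_step_def acyclic_insert)
  then show ?thesis
    using foldl_rp_step_mono by (force simp: rp_run_def D_def)
qed

lemma rp_order_Margin_le_prefix:
  assumes "rp_order V X P L (pre @ (x, y) # post)" and "(a, b) \<in> set pre"
  shows "Margin V P x y \<le> Margin V P a b"
  using assms by (auto simp: rp_order_def sorted_wrt_append)

lemma coherent_defeat_rp:
  assumes "x \<in> X" and "y \<in> X" and "Margin V P x y > 0"
    and "\<nexists>xs. majority_path_from_to V X P y x xs"
  shows "(x, y) \<in> rp V X P"
  unfolding rp_def
proof (clarify)
  fix L ps
  assume order: "rp_order V X P L ps"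
  have "x \<noteq> y"
    using assms(3) by auto
  then have "(x, y) \<in> set ps"
    using order assms(1-3) by (simp add: rp_order_def Pairs_def)
  then obtain pre post where ps: "ps = pre @ (x, y) # post"
    by (meson split_list)
  have prefix: "set pre \<subseteq> majority_rel V X P"
  proof
    fix p assume "p \<in> set pre"
    moreover obtain a b where "p = (a, b)"
      by (cases p)
    ultimately show "p \<in> majority_rel V X P"
      using rp_order_Margin_le_prefix[of V X P L pre x y post a b] order ps assms(3)
      by (fastforce simp: majority_rel_def rp_order_def Pairs_def)
  qed
  have "(y, x) \<notin> (majority_rel V X P)\<^sup>+"
    using assms(4) majority_path_from_to_if_trancl[of y x V X P] by blast
  then show "(x, y) \<in> rp_run ps"
    unfolding ps by (rule rp_run_locks_in_pair[OF prefix irrefl_majority_rel _ \<open>x \<noteq> y\<close>])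
qed

lemma coherent_defeat_bp:
  assumes "finite X" and "x \<in> X" and "y \<in> X" and "Margin V P x y > 0"
    and "\<nexists>xs. majority_path_from_to V X P y x xs"
  shows "(x, y) \<in> bp V X P"
proof -
  have "majority_path_from_to V X P x y [x, y]"
    using assms(2-4) by (simp add: majority_path_from_to_edge majority_rel_def)
  then have "Margin V P x y \<le> Strength V X P x y"
    using path_strength_le_Strength[OF assms(1)] path_strength_edge by metis
  with assms show ?thesis
    by (simp add: bp_def Strength_eq_0_if_no_path)
qed

lemma coherent_defeat_gocha:
  assumes "x \<in> X" and "y \<in> X" and "Margin V P x y > 0"
    and "\<nexists>xs. majority_path_from_to V X P y x xs"
  shows "(x, y) \<in> gocha V X P"
  using assms majority_path_from_to_edge[of x y V X P]
  by (auto simp: gocha_def majority_rel_def)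

theorem proposition3p8:
  fixes V :: "'v set" and X :: "'c set" and P :: "'v \<Rightarrow> 'c rel" and x y :: 'c
  assumes "profile V X P"
    and "x \<in> X" and "y \<in> X"
    and "Margin V P x y > 0"
    and "\<not> (\<exists>xs. majority_path_from_to V X P y x xs)"
  shows "(x, y) \<in> rp V X P \<and> (x, y) \<in> bp V X P \<and> (x, y) \<in> gocha V X P"
proof -
  have "finite X"
    using assms(1) by (simp add: profile_def)
  with assms show ?thesis
    using coherent_defeat_rp coherent_defeat_bp coherent_defeat_gocha by metis
qed

end
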